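(* Let $P\subset\mathbb{R}^n$ be a smooth $n$-dimensional lattice polytope with codegree $c$ and nef value $\tau$. Then $\tau\in\mathbb{Q}_{>0}$ and $\tau>c-1$.
   Context: Write $P=\bigcap_{i=1}^r\{x:\langle\rho_i,x\rangle\ge -a_i\}$ with primitive inner facet normals $\rho_i$ and $a_i\in\mathbb{Z}$; $P$ is smooth if each vertex lies on exactly $n$ facet hyperplanes whose normals form a basis of $\mathbb{Z}^n$. $P^{(s)}=\bigcap_i\{\langle\rho_i,x\rangle\ge -a_i+s\}$. For a vertex $m$ with $\{m\}=\bigcap_{i=1}^n\{\langle\rho_i,x\rangle=-a_i\}$, $m(s)$ is defined by $\{m(s)\}=\bigcap_{i=1}^n\{\langle\rho_i,x\rangle=-a_i+s\}$; $P$ is $s$-spanned if $m(s)\in P^{(s)}$ for all vertices $m$. Codegree: $c=\operatorname{codeg}(P)=\min\{k\in\mathbb{N}:(kP)^{(1)}\cap\mathbb{Z}^n\ne\emptyset\}$. Nef value: $\tau=\tau(P)=\inf\{a/b: a,b\in\mathbb{Z}_{>0},\ aP\text{ is }b\text{-spanned}\}$. *)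

theory Defs
  imports "HOL-Analysis.Analysis"
begin

definition rvec :: "int^'n \<Rightarrow> real^'n" where
  "rvec v = (\<chi> j. real_of_int (v $ j))"

definition lattice_pt :: "real^'n \<Rightarrow> bool" where
  "lattice_pt x \<longleftrightarrow> (\<forall>j. x $ j \<in> \<int>)"

definition primitive :: "int^'n \<Rightarrow> bool" where
  "primitive v \<longleftrightarrow> v \<noteq> 0 \<and> (\<forall>(k::int) w. v = k *s w \<longrightarrow> \<bar>k\<bar> = 1)"

definition lattice_basis :: "('i \<Rightarrow> int^'n) \<Rightarrow> 'i set \<Rightarrow> bool" where
  "lattice_basis \<rho> J \<longleftrightarrow> finite J \<and> inj_on \<rho> J \<and>
     (\<forall>y::int^'n. \<exists>c::'i \<Rightarrow> int. y = (\<Sum>i\<in>J. c i *s \<rho> i)) \<and>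
     (\<forall>c::'i \<Rightarrow> int. (\<Sum>i\<in>J. c i *s \<rho> i) = 0 \<longrightarrow> (\<forall>i\<in>J. c i = 0))"

text \<open>P^(s) for the data (rho_i, a_i): intersection of { <rho_i,x> >= -a_i + s }. Note P = P^(0).\<close>
definition shifted :: "('i \<Rightarrow> int^'n) \<Rightarrow> ('i \<Rightarrow> int) \<Rightarrow> 'i set \<Rightarrow> int \<Rightarrow> (real^'n) set" where
  "shifted \<rho> a I s = {x. \<forall>i\<in>I. rvec (\<rho> i) \<bullet> x \<ge> - real_of_int (a i) + real_of_int s}"

definition tight :: "('i \<Rightarrow> int^'n) \<Rightarrow> ('i \<Rightarrow> int) \<Rightarrow> 'i set \<Rightarrow> real^'n \<Rightarrow> 'i set" where
  "tight \<rho> a I m = {i\<in>I. rvec (\<rho> i) \<bullet> m = - real_of_int (a i)}"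

definition shift_vertex :: "('i \<Rightarrow> int^'n) \<Rightarrow> ('i \<Rightarrow> int) \<Rightarrow> 'i set \<Rightarrow> real^'n \<Rightarrow> int \<Rightarrow> real^'n" where
  "shift_vertex \<rho> a I m s =
     (THE y. \<forall>i\<in>tight \<rho> a I m. rvec (\<rho> i) \<bullet> y = - real_of_int (a i) + real_of_int s)"

definition spanned :: "('i \<Rightarrow> int^'n) \<Rightarrow> ('i \<Rightarrow> int) \<Rightarrow> 'i set \<Rightarrow> int \<Rightarrow> bool" where
  "spanned \<rho> a I s \<longleftrightarrow>
     (\<forall>m. m extreme_point_of shifted \<rho> a I 0 \<longrightarrow> shift_vertex \<rho> a I m s \<in> shifted \<rho> a I s)"

text \<open>Dilation kP has data (rho_i, k a_i).\<close>
definition dil :: "int \<Rightarrow> ('i \<Rightarrow> int) \<Rightarrow> 'i \<Rightarrow> int" where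
  "dil k a = (\<lambda>i. k * a i)"

definition codeg :: "('i \<Rightarrow> int^'n) \<Rightarrow> ('i \<Rightarrow> int) \<Rightarrow> 'i set \<Rightarrow> nat" where
  "codeg \<rho> a I = (LEAST k::nat. k > 0 \<and>
      (\<exists>x. lattice_pt x \<and> x \<in> shifted \<rho> (dil (int k) a) I 1))"

definition nef_value :: "('i \<Rightarrow> int^'n) \<Rightarrow> ('i \<Rightarrow> int) \<Rightarrow> 'i set \<Rightarrow> real" where
  "nef_value \<rho> a I = Inf {real_of_int p / real_of_int q | p q. p > 0 \<and> q > 0 \<and>
      spanned \<rho> (dil p a) I q}"

definition smooth_lattice_polytope :: "('i \<Rightarrow> int^'n) \<Rightarrow> ('i \<Rightarrow> int) \<Rightarrow> 'i set \<Rightarrow> bool" where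
  "smooth_lattice_polytope \<rho> a I \<longleftrightarrow>
     (let P = shifted \<rho> a I 0 in
       finite I \<and> polytope P \<and> aff_dim P = int CARD('n) \<and>
       (\<forall>v. v extreme_point_of P \<longrightarrow> lattice_pt v) \<and>
       (\<forall>i\<in>I. primitive (\<rho> i)) \<and>
       bij_betw (\<lambda>i. P \<inter> {x. rvec (\<rho> i) \<bullet> x = - real_of_int (a i)}) I {F. F facet_of P} \<and>
       (\<forall>m. m extreme_point_of P \<longrightarrow>
          card (tight \<rho> a I m) = CARD('n) \<and> lattice_basis \<rho> (tight \<rho> a I m)))"

end

theory Submission
  imports Defs
begin

text \<open>At a vertex \<open>m\<close> of \<open>P\<close> the normals of the facets through \<open>m\<close> form a lattice basis, so
  there is an integer vector \<open>u\<^sub>m\<close> pairing to \<open>1\<close> with all of them, and \<open>m(s) = m + s u\<^sub>m\<close>;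
  the vertices of \<open>pP\<close> are the points \<open>p m\<close>, with the same facets through them. Hence \<open>pP\<close> is
  \<open>q\<close>-spanned iff \<open>p/q\<close> is at least every ratio \<open>(1 - \<langle>\<rho>\<^sub>j,u\<^sub>m\<rangle>) / (\<langle>\<rho>\<^sub>j,m\<rangle> + a\<^sub>j)\<close> with
  positive denominator, and \<open>\<tau>\<close> is the largest of these finitely many rationals. It is positive,
  since otherwise the ray \<open>m + t u\<^sub>m\<close> would stay in the bounded set \<open>P\<close>. If \<open>\<tau> \<le> c - 1\<close>, then
  \<open>(c - 1)P\<close> is \<open>1\<close>-spanned and \<open>(c - 1)m + u\<^sub>m\<close> is a lattice point of \<open>((c - 1)P)\<^sup>(\<^sup>1\<^sup>)\<close>,
  contradicting the minimality of the codegree \<open>c\<close>.\<close>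

lemma rvec_sum_scale:
  "rvec (\<Sum>j\<in>J. c j *s v j) = (\<Sum>j\<in>J. real_of_int (c j) *\<^sub>R rvec (v j))"
  by (induction J rule: infinite_finite_induct) (auto simp: rvec_def vec_eq_iff)

lemma rvec_axis: "rvec (axis k 1) = axis k 1"
  by (simp add: rvec_def axis_def vec_eq_iff)

lemma inner_rvec_rvec: "rvec v \<bullet> rvec w = real_of_int (\<Sum>k\<in>UNIV. v $ k * w $ k)"
  by (simp add: rvec_def inner_vec_def)

lemma lattice_basis_coeffs_unique:
  assumes "lattice_basis \<rho> J" and "(\<Sum>j\<in>J. c j *s \<rho> j) = (\<Sum>j\<in>J. d j *s \<rho> j)" and "i \<in> J"
  shows "c i = d i"
proof -
  have "(\<Sum>j\<in>J. (c j - d j) *s \<rho> j) = 0"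
    using assms(2) by (simp add: vector_sub_rdistrib sum_subtractf)
  then show ?thesis using assms(1,3) unfolding lattice_basis_def by fastforce
qed

lemma lattice_basis_orthogonal_eq_0:
  assumes "lattice_basis \<rho> J" and "\<forall>j\<in>J. rvec (\<rho> j) \<bullet> z = 0"
  shows "z = 0"
proof -
  have "z $ k = 0" for k
  proof -
    obtain c where c: "axis k 1 = (\<Sum>j\<in>J. c j *s \<rho> j)"
      using assms(1) unfolding lattice_basis_def by blast
    have "z $ k = rvec (axis k 1) \<bullet> z"
      by (simp add: rvec_axis cart_eq_inner_axis inner_commute)
    also have "\<dots> = 0"
      using assms(2) by (simp add: c rvec_sum_scale inner_sum_left)
    finally show ?thesis .
  qed
  then show ?thesis by (simp add: vec_eq_iff)
qed

lemma lattice_basis_dual_vector: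
  assumes "lattice_basis \<rho> J"
  obtains u :: "int^'n" where "\<And>i. i \<in> J \<Longrightarrow> rvec (\<rho> i) \<bullet> rvec u = 1"
proof -
  have "\<forall>k. \<exists>c. axis k 1 = (\<Sum>j\<in>J. c j *s \<rho> j)"
    using assms unfolding lattice_basis_def by blast
  then obtain C where C: "\<And>k. axis k 1 = (\<Sum>j\<in>J. C k j *s \<rho> j)"
    by metis
  \<comment> \<open>column \<open>j\<close> of \<open>C\<close> is the basis vector dual to \<open>\<rho> j\<close>, and \<open>u\<close> is their sum\<close>
  define u :: "int^'n" where "u = (\<chi> k. \<Sum>j\<in>J. C k j)"
  have "rvec (\<rho> i) \<bullet> rvec u = 1" if i: "i \<in> J" for i
  proof -
    define G where "G j = (\<Sum>k\<in>UNIV. \<rho> i $ k * C k j)" for j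
    have "(\<Sum>j\<in>J. G j *s \<rho> j) = (\<Sum>k\<in>UNIV. \<rho> i $ k *s (\<Sum>j\<in>J. C k j *s \<rho> j))"
      unfolding G_def vec_eq_iff
      by (simp add: sum_component sum_distrib_left sum_distrib_right mult.assoc sum.swap[of _ J])
    also have "\<dots> = \<rho> i"
      by (simp add: C[symmetric] basis_expansion)
    also have "\<dots> = (\<Sum>j\<in>J. if j = i then \<rho> j else 0)"
      using i assms by (simp add: lattice_basis_def)
    also have "\<dots> = (\<Sum>j\<in>J. (if j = i then 1 else 0) *s \<rho> j)"
      by (rule sum.cong) auto
    finally have G: "G j = (if j = i then 1 else 0)" if "j \<in> J" for j
      by (rule lattice_basis_coeffs_unique[OF assms _ that])
    have "rvec (\<rho> i) \<bullet> rvec u = real_of_int (\<Sum>j\<in>J. G j)"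
      unfolding inner_rvec_rvec u_def G_def by (simp add: sum_distrib_left sum.swap[of _ J])
    also have "\<dots> = 1"
      using i assms by (simp add: G lattice_basis_def)
    finally show ?thesis .
  qed
  then show thesis by (rule that)
qed

lemma shift_vertex_eq:
  assumes "lattice_basis \<rho> (tight \<rho> a I m)"
    and "\<And>i. i \<in> tight \<rho> a I m \<Longrightarrow> rvec (\<rho> i) \<bullet> u = 1"
  shows "shift_vertex \<rho> a I m s = m + real_of_int s *\<^sub>R u"
  unfolding shift_vertex_def
proof (rule the_equality)
  show shifted_eq: "\<forall>i\<in>tight \<rho> a I m.
      rvec (\<rho> i) \<bullet> (m + real_of_int s *\<^sub>R u) = - real_of_int (a i) + real_of_int s"
    using assms(2) by (simp add: tight_def inner_add_right)
  fix y assume "\<forall>i\<in>tight \<rho> a I m. rvec (\<rho> i) \<bullet> y = - real_of_int (a i) + real_of_int s"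
  with shifted_eq have "\<forall>i\<in>tight \<rho> a I m. rvec (\<rho> i) \<bullet> (y - (m + real_of_int s *\<^sub>R u)) = 0"
    by (simp add: inner_diff_right)
  from lattice_basis_orthogonal_eq_0[OF assms(1) this] show "y = m + real_of_int s *\<^sub>R u"
    by simp
qed

lemma scaleR_mem_shifted_dil:
  assumes "p > 0"
  shows "real_of_int p *\<^sub>R x \<in> shifted \<rho> (dil p a) I 0 \<longleftrightarrow> x \<in> shifted \<rho> a I 0"
proof -
  have "- real_of_int (p * a i) \<le> rvec (\<rho> i) \<bullet> (real_of_int p *\<^sub>R x)
      \<longleftrightarrow> - real_of_int (a i) \<le> rvec (\<rho> i) \<bullet> x" for i
  proof -
    have "- real_of_int (p * a i) = real_of_int p * (- real_of_int (a i))" by simp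
    then show ?thesis
      using assms by (simp only: inner_scaleR_right mult_le_cancel_left_pos of_int_0_less_iff)
  qed
  then show ?thesis by (simp add: shifted_def dil_def)
qed

lemma shifted_dil:
  assumes "p > 0"
  shows "shifted \<rho> (dil p a) I 0 = (\<lambda>x. real_of_int p *\<^sub>R x) ` shifted \<rho> a I 0"
proof (intro set_eqI iffI)
  fix y assume "y \<in> shifted \<rho> (dil p a) I 0"
  moreover have y: "y = real_of_int p *\<^sub>R (inverse (real_of_int p) *\<^sub>R y)"
    using assms by simp
  ultimately have "inverse (real_of_int p) *\<^sub>R y \<in> shifted \<rho> a I 0"
    using scaleR_mem_shifted_dil[OF assms] by metis
  with y show "y \<in> (\<lambda>x. real_of_int p *\<^sub>R x) ` shifted \<rho> a I 0"
    by blast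
qed (use scaleR_mem_shifted_dil[OF assms] in auto)

lemma tight_dil:
  assumes "p \<noteq> 0"
  shows "tight \<rho> (dil p a) I (real_of_int p *\<^sub>R m) = tight \<rho> a I m"
proof -
  have "rvec (\<rho> i) \<bullet> (real_of_int p *\<^sub>R m) = - real_of_int (p * a i)
      \<longleftrightarrow> rvec (\<rho> i) \<bullet> m = - real_of_int (a i)" for i
  proof -
    have "- real_of_int (p * a i) = real_of_int p * (- real_of_int (a i))" by simp
    then show ?thesis
      using assms by (simp only: inner_scaleR_right mult_cancel_left of_int_eq_0_iff simp_thms)
  qed
  then show ?thesis by (simp add: tight_def dil_def)
qed

lemma extreme_point_of_scaleR_image:
  fixes S :: "'a::real_vector set"
  assumes "c \<noteq> 0"
  shows "y extreme_point_of (\<lambda>x. c *\<^sub>R x) ` S \<longleftrightarrow> (\<exists>m. y = c *\<^sub>R m \<and> m extreme_point_of S)"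
proof -
  have inj: "inj (\<lambda>x::'a. c *\<^sub>R x)" using assms by (simp add: inj_on_def)
  have "y = c *\<^sub>R (inverse c *\<^sub>R y)" using assms by simp
  then obtain m where ym: "y = c *\<^sub>R m" by blast
  have "y extreme_point_of (\<lambda>x. c *\<^sub>R x) ` S \<longleftrightarrow> m extreme_point_of S"
    using face_of_linear_image[OF linear_scaleR inj, of "{m}" S]
    by (simp add: ym flip: face_of_singleton)
  then show ?thesis using ym assms by auto
qed

lemma shifted_ray_unbounded:
  assumes "m \<in> shifted \<rho> a I s" and "u \<noteq> 0" and "\<And>j. j \<in> I \<Longrightarrow> rvec (\<rho> j) \<bullet> u \<ge> 0"
  shows "\<not> bounded (shifted \<rho> a I s)"
proof
  assume "bounded (shifted \<rho> a I s)"
  then obtain B where B: "\<And>x. x \<in> shifted \<rho> a I s \<Longrightarrow> norm x \<le> B"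
    unfolding bounded_iff by blast
  have ray: "m + t *\<^sub>R u \<in> shifted \<rho> a I s" if "t \<ge> 0" for t
    using assms that by (auto simp: shifted_def inner_add_right intro!: add_increasing2)
  define t where "t = (B + norm m + 1) / norm u"
  have "B + norm m + 1 > 0"
    using B[OF assms(1)] norm_ge_zero[of m] by linarith
  then have "norm (t *\<^sub>R u) = B + norm m + 1" and t: "t \<ge> 0"
    using assms(2) by (simp_all add: t_def)
  moreover have "norm (t *\<^sub>R u) \<le> norm (m + t *\<^sub>R u) + norm m"
    using norm_triangle_ineq4[of "m + t *\<^sub>R u" m] by simp
  ultimately show False
    using B[OF ray[OF t]] by linarith
qed

lemma nonneg_combination_iff_ratio_le:
  fixes p q d e :: real
  assumes "p > 0" "q > 0" "d \<ge> 0" "d = 0 \<Longrightarrow> e = 1"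
  shows "0 \<le> p * d + q * (e - 1) \<longleftrightarrow> (d > 0 \<longrightarrow> (1 - e) / d \<le> p / q)"
proof (cases "d = 0")
  case False
  with assms show ?thesis by (auto simp: field_simps)
qed (use assms in simp)

lemma Inf_quotients_eq_threshold:
  fixes S :: "int \<Rightarrow> int \<Rightarrow> bool" and T :: real
  assumes S: "\<And>p q. p > 0 \<Longrightarrow> q > 0 \<Longrightarrow> S p q \<longleftrightarrow> T \<le> real_of_int p / real_of_int q"
    and "r > 0" "s > 0" "T = real_of_int r / real_of_int s"
  shows "Inf {real_of_int p / real_of_int q | p q. p > 0 \<and> q > 0 \<and> S p q} = T"
proof (rule cInf_eq_minimum)
  show "T \<in> {real_of_int p / real_of_int q | p q. p > 0 \<and> q > 0 \<and> S p q}"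
    using assms by auto
qed (use S in auto)

locale smooth_polytope =
  fixes \<rho> :: "'i \<Rightarrow> int^'n" and a :: "'i \<Rightarrow> int" and I :: "'i set"
  assumes smooth: "smooth_lattice_polytope \<rho> a I"
begin

definition vertices :: "(real^'n) set" where
  "vertices = {m. m extreme_point_of shifted \<rho> a I 0}"

lemma
  shows finite_facets: "finite I"
    and polytope: "polytope (shifted \<rho> a I 0)"
    and aff_dim_full: "aff_dim (shifted \<rho> a I 0) = int CARD('n)"
    and vertex_lattice_pt: "m \<in> vertices \<Longrightarrow> lattice_pt m"
    and card_tight: "m \<in> vertices \<Longrightarrow> card (tight \<rho> a I m) = CARD('n)"
    and tight_lattice_basis: "m \<in> vertices \<Longrightarrow> lattice_basis \<rho> (tight \<rho> a I m)"
  using smooth unfolding smooth_lattice_polytope_def Let_def vertices_def mem_Collect_eq by blast+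

lemma vertex_in_polytope: "m \<in> vertices \<Longrightarrow> m \<in> shifted \<rho> a I 0"
  by (simp add: vertices_def extreme_point_of_def)

lemma finite_vertices: "finite vertices"
  unfolding vertices_def by (intro finite_polyhedron_extreme_points polytope_imp_polyhedron polytope)

lemma vertices_nonempty: "vertices \<noteq> {}"
proof
  assume "vertices = {}"
  then have "shifted \<rho> a I 0 = convex hull {}"
    using Krein_Milman_Minkowski[OF polytope_imp_compact polytope_imp_convex, OF polytope polytope]
    by (simp add: vertices_def)
  then show False
    using aff_dim_full by simp
qed

definition dual :: "real^'n \<Rightarrow> int^'n" where
  "dual m = (SOME u. \<forall>i\<in>tight \<rho> a I m. rvec (\<rho> i) \<bullet> rvec u = 1)"

lemma dual_tight:
  assumes "m \<in> vertices" and "i \<in> tight \<rho> a I m"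
  shows "rvec (\<rho> i) \<bullet> rvec (dual m) = 1"
proof -
  have "\<exists>u. \<forall>i\<in>tight \<rho> a I m. rvec (\<rho> i) \<bullet> rvec u = 1"
    using lattice_basis_dual_vector[OF tight_lattice_basis[OF assms(1)]] by metis
  then have "\<forall>i\<in>tight \<rho> a I m. rvec (\<rho> i) \<bullet> rvec (dual m) = 1"
    unfolding dual_def by (rule someI_ex)
  with assms(2) show ?thesis by blast
qed

lemma shift_vertex_dil:
  assumes "m \<in> vertices" and "p \<noteq> 0"
  shows "shift_vertex \<rho> (dil p a) I (real_of_int p *\<^sub>R m) q
    = real_of_int p *\<^sub>R m + real_of_int q *\<^sub>R rvec (dual m)"
proof (rule shift_vertex_eq)
  show "lattice_basis \<rho> (tight \<rho> (dil p a) I (real_of_int p *\<^sub>R m))"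
    using tight_lattice_basis[OF assms(1)] by (simp add: tight_dil[OF assms(2)])
  show "rvec (\<rho> i) \<bullet> rvec (dual m) = 1" if "i \<in> tight \<rho> (dil p a) I (real_of_int p *\<^sub>R m)" for i
    using that dual_tight[OF assms(1)] by (simp add: tight_dil[OF assms(2)])
qed

lemma extreme_point_of_dil_iff:
  assumes "p > 0"
  shows "y extreme_point_of shifted \<rho> (dil p a) I 0 \<longleftrightarrow> (\<exists>m\<in>vertices. y = real_of_int p *\<^sub>R m)"
  using extreme_point_of_scaleR_image[of "real_of_int p" y] assms
  by (auto simp: shifted_dil vertices_def)

definition slack :: "real^'n \<Rightarrow> 'i \<Rightarrow> real" where
  "slack m j = rvec (\<rho> j) \<bullet> m + real_of_int (a j)"

definition pairing :: "real^'n \<Rightarrow> 'i \<Rightarrow> real" where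
  "pairing m j = rvec (\<rho> j) \<bullet> rvec (dual m)"

lemma slack_nonneg:
  assumes "m \<in> vertices" and "j \<in> I"
  shows "0 \<le> slack m j"
proof -
  have "- real_of_int (a j) \<le> rvec (\<rho> j) \<bullet> m"
    using vertex_in_polytope[OF assms(1)] assms(2) by (auto simp: shifted_def)
  then show ?thesis by (simp add: slack_def)
qed

lemma pairing_eq_1_if_slack_eq_0:
  "m \<in> vertices \<Longrightarrow> j \<in> I \<Longrightarrow> slack m j = 0 \<Longrightarrow> pairing m j = 1"
  using dual_tight by (auto simp: slack_def pairing_def tight_def)

lemma slack_Ints: "m \<in> vertices \<Longrightarrow> slack m j \<in> \<int>"
  using vertex_lattice_pt unfolding slack_def lattice_pt_def rvec_def inner_vec_def
  by (intro Ints_add Ints_sum Ints_mult) auto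

lemma pairing_Ints: "pairing m j \<in> \<int>"
  unfolding pairing_def inner_rvec_rvec by (rule Ints_of_int)

lemma spanned_dil_iff:
  assumes "p > 0"
  shows "spanned \<rho> (dil p a) I q \<longleftrightarrow>
    (\<forall>m\<in>vertices. \<forall>j\<in>I. 0 \<le> real_of_int p * slack m j + real_of_int q * (pairing m j - 1))"
proof -
  have "spanned \<rho> (dil p a) I q \<longleftrightarrow>
      (\<forall>m\<in>vertices. real_of_int p *\<^sub>R m + real_of_int q *\<^sub>R rvec (dual m) \<in> shifted \<rho> (dil p a) I q)"
    using assms by (auto simp: spanned_def extreme_point_of_dil_iff shift_vertex_dil)
  then show ?thesis
    by (simp add: shifted_def slack_def pairing_def dil_def inner_add_right algebra_simps)
qed

lemma exists_pairing_less_1: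
  assumes "m \<in> vertices"
  obtains j where "j \<in> I" and "pairing m j < 1"
proof (rule ccontr)
  assume "\<not> thesis"
  with that have ge: "j \<in> I \<Longrightarrow> 1 \<le> pairing m j" for j
    by fastforce
  obtain i where "i \<in> tight \<rho> a I m"
    using card_tight[OF assms] by fastforce
  then have "rvec (dual m) \<noteq> 0"
    using dual_tight[OF assms] by fastforce
  moreover have "0 \<le> rvec (\<rho> j) \<bullet> rvec (dual m)" if "j \<in> I" for j
    using ge[OF that] unfolding pairing_def by linarith
  ultimately have "\<not> bounded (shifted \<rho> a I 0)"
    by (rule shifted_ray_unbounded[OF vertex_in_polytope[OF assms]])
  then show False
    using polytope_imp_bounded[OF polytope] by blast
qed

definition ratios :: "real set" where
  "ratios = {(1 - pairing m j) / slack m j | m j. m \<in> vertices \<and> j \<in> I \<and> slack m j > 0}"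

definition threshold :: real where
  "threshold = Max ratios"

lemma finite_ratios: "finite ratios"
proof -
  have "ratios \<subseteq> (\<lambda>(m, j). (1 - pairing m j) / slack m j) ` (vertices \<times> I)"
    by (auto simp: ratios_def)
  then show ?thesis
    using finite_subset finite_vertices finite_facets by blast
qed

lemma positive_ratio_exists: "\<exists>x\<in>ratios. x > 0"
proof -
  obtain m where m: "m \<in> vertices"
    using vertices_nonempty by blast
  then obtain j where j: "j \<in> I" "pairing m j < 1"
    by (rule exists_pairing_less_1)
  then have pos: "slack m j > 0"
    using slack_nonneg[OF m j(1)] pairing_eq_1_if_slack_eq_0[OF m j(1)] by force
  then have "(1 - pairing m j) / slack m j \<in> ratios"
    using m j unfolding ratios_def by blast
  moreover have "(1 - pairing m j) / slack m j > 0"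
    using pos j(2) by simp
  ultimately show ?thesis ..
qed

lemma threshold_pos: "threshold > 0"
proof -
  obtain x where "x \<in> ratios" and "x > 0"
    using positive_ratio_exists by blast
  then show ?thesis
    using Max_ge[OF finite_ratios] unfolding threshold_def by fastforce
qed

lemma spanned_dil_iff_threshold:
  assumes "p > 0" and "q > 0"
  shows "spanned \<rho> (dil p a) I q \<longleftrightarrow> threshold \<le> real_of_int p / real_of_int q"
proof -
  have "0 \<le> real_of_int p * slack m j + real_of_int q * (pairing m j - 1)
      \<longleftrightarrow> (slack m j > 0 \<longrightarrow> (1 - pairing m j) / slack m j \<le> real_of_int p / real_of_int q)"
    if "m \<in> vertices" and "j \<in> I" for m j
    using nonneg_combination_iff_ratio_le slack_nonneg[OF that] pairing_eq_1_if_slack_eq_0[OF that]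
      assms by simp
  then have "spanned \<rho> (dil p a) I q \<longleftrightarrow> (\<forall>x\<in>ratios. x \<le> real_of_int p / real_of_int q)"
    unfolding spanned_dil_iff[OF assms(1)] ratios_def by blast
  also have "\<dots> \<longleftrightarrow> threshold \<le> real_of_int p / real_of_int q"
    using positive_ratio_exists unfolding threshold_def by (subst Max_le_iff[OF finite_ratios]) auto
  finally show ?thesis .
qed

lemma threshold_int_quotient:
  obtains r s :: int where "r > 0" and "s > 0" and "threshold = real_of_int r / real_of_int s"
proof -
  have "threshold \<in> ratios"
    using positive_ratio_exists unfolding threshold_def by (intro Max_in[OF finite_ratios]) auto
  then obtain m j where m: "m \<in> vertices" and pos: "slack m j > 0"
    and eq: "threshold = (1 - pairing m j) / slack m j"
    unfolding ratios_def by blast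
  obtain s where s: "slack m j = real_of_int s"
    using slack_Ints[OF m] Ints_cases by metis
  obtain e where e: "pairing m j = real_of_int e"
    using pairing_Ints Ints_cases by metis
  have "real_of_int (1 - e) > 0"
    using threshold_pos pos eq e by (simp add: zero_less_divide_iff)
  then show ?thesis
    using that[of "1 - e" s] pos eq s e by simp
qed

lemma nef_value_eq_threshold: "nef_value \<rho> a I = threshold"
proof -
  obtain r s where "r > 0" and "s > 0" and "threshold = real_of_int r / real_of_int s"
    by (rule threshold_int_quotient)
  then show ?thesis
    unfolding nef_value_def
    by (intro Inf_quotients_eq_threshold[where S = "\<lambda>p q. spanned \<rho> (dil p a) I q"]
        spanned_dil_iff_threshold)
qed

lemma codeg_le:
  assumes "k > 0" and "threshold \<le> real k"
  shows "codeg \<rho> a I \<le> k"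
proof -
  obtain m where m: "m \<in> vertices"
    using vertices_nonempty by blast
  have kp: "int k > 0"
    using assms(1) by simp
  have "spanned \<rho> (dil (int k) a) I 1"
    using spanned_dil_iff_threshold[OF kp] assms(2) by simp
  moreover have "real_of_int (int k) *\<^sub>R m extreme_point_of shifted \<rho> (dil (int k) a) I 0"
    using extreme_point_of_dil_iff[OF kp] m by blast
  ultimately have "shift_vertex \<rho> (dil (int k) a) I (real_of_int (int k) *\<^sub>R m) 1
      \<in> shifted \<rho> (dil (int k) a) I 1"
    unfolding spanned_def by blast
  then have "real k *\<^sub>R m + rvec (dual m) \<in> shifted \<rho> (dil (int k) a) I 1"
    using shift_vertex_dil[OF m, of "int k" 1] assms(1) by simp
  moreover have "lattice_pt (real k *\<^sub>R m + rvec (dual m))"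
    using vertex_lattice_pt[OF m] by (auto simp: lattice_pt_def rvec_def)
  ultimately show ?thesis
    unfolding codeg_def using assms(1) by (intro Least_le) blast
qed

end

theorem lemma2p4:
  fixes \<rho> :: "'i \<Rightarrow> int^'n" and a :: "'i \<Rightarrow> int" and I :: "'i set"
  assumes "smooth_lattice_polytope \<rho> a I"
  shows "nef_value \<rho> a I \<in> \<rat> \<and> nef_value \<rho> a I > 0 \<and>
         nef_value \<rho> a I > real (codeg \<rho> a I) - 1"
proof -
  interpret smooth_polytope \<rho> a I
    by (rule smooth_polytope.intro) (rule assms)
  obtain r s where "threshold = real_of_int r / real_of_int s"
    using threshold_int_quotient by blast
  then have rational: "threshold \<in> \<rat>"
    by simp
  have "threshold > real (codeg \<rho> a I) - 1"
  proof (rule ccontr)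
    assume "\<not> threshold > real (codeg \<rho> a I) - 1"
    then have "threshold \<le> real (codeg \<rho> a I - 1)" and "codeg \<rho> a I - 1 > 0"
      using threshold_pos by linarith+
    then have "codeg \<rho> a I \<le> codeg \<rho> a I - 1"
      by (rule codeg_le[rotated])
    with \<open>codeg \<rho> a I - 1 > 0\<close> show False
      by linarith
  qed
  with rational show ?thesis
    using threshold_pos by (simp add: nef_value_eq_threshold)
qed

end
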